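(* Let $a_1,\dots,a_k$ be positive integers with $\gcd(a_1,\dots,a_k)=1$, let $\mathit{NR}$ be the finite set of positive integers that are not representable, let $a$ be one of the $a_i$, let $\mathcal{N}$ be the set of positive integers $n$ such that $n$ is representable and $n-a$ is not, and let $\mathcal{N}_0=\mathcal{N}\cup\{0\}$. Then for all complex $z\neq 0$ with $e^{az}\neq1$, \[ \sum_{n\in\mathit{NR}}e^{nz}=\frac{1}{e^{az}-1}\sum_{n\in\mathcal{N}_0}e^{nz}-\frac{1}{e^z-1}, \] and, writing $S_m=\sum_{n\in\mathit{NR}}n^m$, for every integer $m\ge1$, \[ mS_{m-1}=a^{m-1}\sum_{n\in\mathcal{N}_0}B_m(n/a)-B_m . \]
   Context: An integer $n$ is representable if $n=\sum_i a_ix_i$ with all $x_i$ nonnegative integers. $B_m(x)$ denotes the Bernoulli polynomials, defined by $\frac{te^{tx}}{e^t-1}=\sum_{m\ge0}B_m(x)\frac{t^m}{m!}$, and $B_m=B_m(0)$ are the Bernoulli numbers. *)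

theory Defs
  imports "HOL-Analysis.Analysis" "HOL-Computational_Algebra.Formal_Power_Series"
begin

definition bernpoly :: "nat \<Rightarrow> real \<Rightarrow> real" where
  "bernpoly m x = fact m * fps_nth (fps_X * fps_exp x / (fps_exp 1 - 1)) m"

definition bernoulli :: "nat \<Rightarrow> real" where
  "bernoulli m = bernpoly m 0"

definition representable :: "(nat \<Rightarrow> nat) \<Rightarrow> nat \<Rightarrow> int \<Rightarrow> bool" where
  "representable a k n \<longleftrightarrow> (\<exists>x :: nat \<Rightarrow> nat. n = (\<Sum>i=1..k. int (a i * x i)))"

end

theory Submission
  imports Defs
begin

text \<open>Fix A = a_j and let S be the set of representable naturals. Since the gcd is 1, every
  residue class r mod A meets S, in a least element w_r; as S is closed under adding A, the
  non-representable numbers are exactly the r + tA < w_r, and N0 is the set of the w_r. So for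
  any F the sum of F(n + A) - F(n) over the non-representable n telescopes along each residue
  class to the sum of F(w_r) - F(r). The choice F(n) = x^n gives the first identity with x = e^z;
  the choice F(n) = A^(m-1) B_m(n/A) gives the second, by B_m(x + 1) - B_m(x) = m x^(m-1) and
  the multiplication theorem A^(m-1) (B_m(0/A) + ... + B_m((A-1)/A)) = B_m.\<close>

no_notation vec_nth (infixl \<open>$\<close> 90)
notation fps_nth (infixl \<open>$\<close> 75)

lemma fps_exp_minus_one_dvd_fps_X:
  assumes "c \<noteq> 0"
  shows "(fps_exp c - 1 :: 'a::field_char_0 fps) dvd fps_X"
proof -
  have "fps_exp c - 1 = fps_X * fps_shift 1 (fps_exp c - 1 :: 'a fps)"
    by (rule fps_ext) auto
  moreover have "is_unit (fps_shift 1 (fps_exp c - 1 :: 'a fps))"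
    using assms by simp
  ultimately show ?thesis
    by (metis dvd_refl mult_unit_dvd_iff)
qed

definition bernoulli_egf :: "real fps" where
  "bernoulli_egf = fps_X / (fps_exp 1 - 1)"

lemma bernoulli_egf_mult: "bernoulli_egf * (fps_exp 1 - 1) = fps_X"
  unfolding bernoulli_egf_def using fps_exp_minus_one_dvd_fps_X[of "1 :: real"] by simp

lemma bernpoly_conv_bernoulli_egf: "bernpoly m x = fact m * (fps_exp x * bernoulli_egf) $ m"
  unfolding bernpoly_def bernoulli_egf_def
  using div_mult_swap[OF fps_exp_minus_one_dvd_fps_X[of "1 :: real"], of "fps_exp x"]
  by (simp add: mult.commute)

lemma bernpoly_plus_one:
  assumes "m \<ge> 1"
  shows "bernpoly m (x + 1) - bernpoly m x = real m * x ^ (m - 1)"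
proof -
  obtain q where q: "m = Suc q"
    using assms by (cases m) auto
  have "fps_exp (x + 1) * bernoulli_egf - fps_exp x * bernoulli_egf
      = fps_exp x * (bernoulli_egf * (fps_exp 1 - 1))"
    by (simp add: fps_exp_add_mult algebra_simps)
  also have "\<dots> = fps_X * fps_exp x"
    by (simp add: bernoulli_egf_mult)
  finally show ?thesis
    by (simp add: bernpoly_conv_bernoulli_egf q flip: right_diff_distrib fps_sub_nth)
qed

lemma bernoulli_egf_scaled_mult:
  "(bernoulli_egf oo (fps_const c * fps_X)) * (fps_exp c - 1) = fps_const c * fps_X"
proof -
  have "(bernoulli_egf oo (fps_const c * fps_X)) * (fps_exp c - 1)
      = (bernoulli_egf * (fps_exp 1 - 1)) oo (fps_const c * fps_X)"
    by (simp add: fps_compose_mult_distrib fps_compose_sub_distrib)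
  then show ?thesis
    by (simp add: bernoulli_egf_mult)
qed

lemma sum_fps_exp_fractions_mult:
  assumes "A > 0"
  shows "(\<Sum>r<A. fps_exp (real r / real A)) * (fps_exp (1 / real A) - 1) = (fps_exp 1 - 1 :: real fps)"
proof -
  have "(\<Sum>r<A. fps_exp (real r / real A)) * (fps_exp (1 / real A) - 1)
      = (\<Sum>r<A. fps_exp (real (Suc r) / real A) - fps_exp (real r / real A))"
    unfolding sum_distrib_right
    by (rule sum.cong) (auto simp: algebra_simps add_divide_distrib fps_exp_add_mult[symmetric])
  also have "\<dots> = fps_exp 1 - 1"
    using assms by (subst sum_lessThan_telescope) simp
  finally show ?thesis .
qed

lemma sum_bernpoly_fractions:
  assumes A: "A > 0" and m: "m \<ge> 1"
  shows "real A ^ (m - 1) * (\<Sum>r<A. bernpoly m (real r / real A)) = bernoulli m"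
proof -
  define c where "c = 1 / real A"
  define E where "E = (\<Sum>r<A. fps_exp (real r / real A))"
  have "fps_exp c - 1 \<noteq> (0 :: real fps)"
    using A fps_exp_minus_one_dvd_fps_X[of c] by (auto simp: c_def)
  moreover have "(E * bernoulli_egf) * (fps_exp c - 1) = fps_X"
  proof -
    have "(E * bernoulli_egf) * (fps_exp c - 1) = bernoulli_egf * (E * (fps_exp c - 1))"
      by (simp only: ac_simps)
    then show ?thesis
      using sum_fps_exp_fractions_mult[OF A] by (simp add: E_def c_def bernoulli_egf_mult)
  qed
  moreover have "(fps_const (real A) * (bernoulli_egf oo (fps_const c * fps_X))) * (fps_exp c - 1)
      = fps_X"
  proof -
    have "(fps_const (real A) * (bernoulli_egf oo (fps_const c * fps_X))) * (fps_exp c - 1)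
        = fps_const (real A) * (fps_const c * fps_X)"
      by (simp only: mult.assoc bernoulli_egf_scaled_mult)
    also have "\<dots> = fps_X"
      using A by (simp add: c_def flip: mult.assoc fps_const_mult)
    finally show ?thesis .
  qed
  ultimately have "E * bernoulli_egf = fps_const (real A) * (bernoulli_egf oo (fps_const c * fps_X))"
    by (metis mult_right_cancel)
  then have "(E * bernoulli_egf) $ m = real A * c ^ m * bernoulli_egf $ m"
    by simp
  moreover have "(\<Sum>r<A. bernpoly m (real r / real A)) = fact m * (E * bernoulli_egf) $ m"
    unfolding E_def bernpoly_conv_bernoulli_egf sum_distrib_right fps_sum_nth sum_distrib_left ..
  moreover have "real A ^ (m - 1) * real A * c ^ m = 1"
    using A m by (simp add: c_def power_one_over flip: power_Suc2)
  ultimately show ?thesis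
    by (simp add: bernoulli_def bernpoly_conv_bernoulli_egf mult_ac)
qed

lemma inj_on_add_mult_modulus:
  fixes A :: nat
  assumes "A > 0"
  shows "inj_on (\<lambda>(r, t). r + t * A) ({..<A} \<times> UNIV)"
proof (rule inj_onI, clarsimp)
  fix r t r' t' assume r: "r < A" "r' < A" and eq: "r + t * A = r' + t' * A"
  then have "(r + t * A) mod A = (r' + t' * A) mod A"
    by simp
  then have "r = r'"
    using r by simp
  with eq assms show "r = r' \<and> t = t'"
    by simp
qed

locale apery =
  fixes S :: "nat set" and A :: nat
  assumes modulus_pos: "A > 0"
    and add_modulus_mem: "n \<in> S \<Longrightarrow> n + A \<in> S"
    and residue_class_meets: "r < A \<Longrightarrow> \<exists>n\<in>S. n mod A = r"
begin

definition apery_elem :: "nat \<Rightarrow> nat" where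
  "apery_elem r = (LEAST n. n \<in> S \<and> n mod A = r)"

definition apery_set :: "nat set" where
  "apery_set = {n \<in> S. A \<le> n \<longrightarrow> n - A \<notin> S}"

lemma apery_elem_mem:
  assumes "r < A"
  shows "apery_elem r \<in> S" and "apery_elem r mod A = r"
  using LeastI_ex[of "\<lambda>n. n \<in> S \<and> n mod A = r"] residue_class_meets[OF assms]
  unfolding apery_elem_def by auto

lemma apery_elem_le: "n \<in> S \<Longrightarrow> apery_elem (n mod A) \<le> n"
  unfolding apery_elem_def by (rule Least_le) simp

lemma apery_elem_eq: "r < A \<Longrightarrow> apery_elem r = r + apery_elem r div A * A"
  using apery_elem_mem(2)[of r] div_mult_mod_eq[of "apery_elem r" A] by simp

lemma add_mult_modulus_mem: "n \<in> S \<Longrightarrow> n + t * A \<in> S"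
proof (induction t)
  case (Suc t)
  then show ?case
    using add_modulus_mem[of "n + t * A"] by (simp add: add_ac)
qed simp

lemma less_apery_elem_iff: "r < A \<Longrightarrow> r + t * A < apery_elem r \<longleftrightarrow> t < apery_elem r div A"
  using modulus_pos by (subst apery_elem_eq) auto

lemma dvd_diff_apery_elem:
  assumes "apery_elem (n mod A) \<le> n"
  shows "A dvd n - apery_elem (n mod A)"
  by (metis assms apery_elem_mem(2) mod_eq_dvd_iff_nat mod_less_divisor modulus_pos)

lemma mem_iff_apery_elem_le: "n \<in> S \<longleftrightarrow> apery_elem (n mod A) \<le> n"
proof
  assume "apery_elem (n mod A) \<le> n"
  moreover obtain t where "n - apery_elem (n mod A) = t * A"
    using dvd_diff_apery_elem[OF calculation] by (metis dvdE mult.commute)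
  ultimately have "n = apery_elem (n mod A) + t * A"
    by simp
  then show "n \<in> S"
    using add_mult_modulus_mem apery_elem_mem(1) modulus_pos by (metis mod_less_divisor)
qed (rule apery_elem_le)

lemma complement_eq:
  "- S = (\<lambda>(r, t). r + t * A) ` (SIGMA r:{..<A}. {..<apery_elem r div A})"
proof (intro equalityI subsetI)
  fix n assume "n \<in> - S"
  then have "n mod A + n div A * A < apery_elem (n mod A)"
    using mem_iff_apery_elem_le by simp
  then show "n \<in> (\<lambda>(r, t). r + t * A) ` (SIGMA r:{..<A}. {..<apery_elem r div A})"
    using modulus_pos less_apery_elem_iff[of "n mod A" "n div A"]
    by (intro image_eqI[of _ _ "(n mod A, n div A)"]) auto
next
  fix n assume "n \<in> (\<lambda>(r, t). r + t * A) ` (SIGMA r:{..<A}. {..<apery_elem r div A})"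
  then obtain r t where "r < A" "t < apery_elem r div A" and n: "n = r + t * A"
    by auto
  then show "n \<in> - S"
    using less_apery_elem_iff mem_iff_apery_elem_le by (simp add: not_le)
qed

lemma finite_complement: "finite (- S)"
  unfolding complement_eq by auto

lemma sum_complement:
  "sum g (- S) = (\<Sum>r<A. \<Sum>t<apery_elem r div A. g (r + t * A))"
proof -
  have "inj_on (\<lambda>(r, t). r + t * A) (SIGMA r:{..<A}. {..<apery_elem r div A})"
    by (rule inj_on_subset[OF inj_on_add_mult_modulus[OF modulus_pos]]) auto
  then show ?thesis
    unfolding complement_eq by (simp add: sum.reindex sum.Sigma case_prod_unfold)
qed

lemma apery_set_eq: "apery_set = apery_elem ` {..<A}"
proof (intro equalityI subsetI)
  fix n assume "n \<in> apery_set"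
  then have n: "n \<in> S" "A \<le> n \<Longrightarrow> n - A \<notin> S"
    by (auto simp: apery_set_def)
  define r where "r = n mod A"
  have r: "r < A"
    using modulus_pos by (simp add: r_def)
  have "apery_elem r = n"
  proof (rule ccontr)
    assume "apery_elem r \<noteq> n"
    then have "apery_elem r < n"
      using apery_elem_le[OF n(1)] by (simp add: r_def)
    moreover have "A dvd n - apery_elem r"
      using dvd_diff_apery_elem[of n] calculation by (simp add: r_def)
    ultimately have le: "apery_elem r + A \<le> n"
      by (auto dest: dvd_imp_le)
    then have "(n - A) mod A = r"
      by (simp add: le_mod_geq r_def)
    then have "n - A \<in> S"
      using le mem_iff_apery_elem_le[of "n - A"] by simp
    then show False
      using le n(2) by simp
  qed
  then show "n \<in> apery_elem ` {..<A}"
    using r by blast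
next
  fix n assume "n \<in> apery_elem ` {..<A}"
  then obtain r where r: "r < A" and n: "n = apery_elem r"
    by auto
  have "n - A \<notin> S" if "A \<le> n"
  proof
    assume "n - A \<in> S"
    moreover have "(n - A) mod A = r"
      using that apery_elem_mem(2)[OF r] unfolding n by (metis le_mod_geq)
    ultimately have "apery_elem r \<le> n - A"
      using apery_elem_le by metis
    then show False
      using n modulus_pos that by simp
  qed
  then show "n \<in> apery_set"
    using apery_elem_mem(1)[OF r] n by (simp add: apery_set_def)
qed

lemma sum_apery_set: "sum g apery_set = (\<Sum>r<A. g (apery_elem r))"
proof -
  have "inj_on apery_elem {..<A}"
    by (rule inj_onI) (metis apery_elem_mem(2) lessThan_iff)
  then show ?thesis
    by (simp add: apery_set_eq sum.reindex)
qed

lemma sum_complement_telescope: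
  fixes F :: "nat \<Rightarrow> 'a::ab_group_add"
  shows "(\<Sum>n\<in>-S. F (n + A) - F n) = (\<Sum>n\<in>apery_set. F n) - (\<Sum>r<A. F r)"
proof -
  have class_sum: "(\<Sum>t<apery_elem r div A. F (r + t * A + A) - F (r + t * A))
      = F (apery_elem r) - F r" if "r < A" for r
    using sum_lessThan_telescope[of "\<lambda>t. F (r + t * A)" "apery_elem r div A"]
    by (simp add: add_ac apery_elem_eq[OF that, symmetric])
  have "(\<Sum>n\<in>-S. F (n + A) - F n) = (\<Sum>r<A. F (apery_elem r) - F r)"
    unfolding sum_complement by (rule sum.cong) (simp_all add: class_sum)
  then show ?thesis
    by (simp add: sum_apery_set sum_subtractf)
qed

lemma sum_power_complement:
  fixes x :: "'a::field"
  assumes "x ^ A \<noteq> 1"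
  shows "(\<Sum>n\<in>-S. x ^ n) = 1 / (x ^ A - 1) * (\<Sum>n\<in>apery_set. x ^ n) - 1 / (x - 1)"
proof -
  have "x \<noteq> 1"
    using assms by auto
  have "(x ^ A - 1) * (\<Sum>n\<in>-S. x ^ n) = (\<Sum>n\<in>-S. x ^ (n + A) - x ^ n)"
    by (simp add: sum_distrib_left power_add algebra_simps)
  also have "\<dots> = (\<Sum>n\<in>apery_set. x ^ n) - (\<Sum>r<A. x ^ r)"
    by (rule sum_complement_telescope)
  also have "(\<Sum>r<A. x ^ r) = (x ^ A - 1) / (x - 1)"
    using \<open>x \<noteq> 1\<close> by (simp add: sum_gp_strict divide_simps algebra_simps)
  finally have eq: "(x ^ A - 1) * (\<Sum>n\<in>-S. x ^ n)
      = (\<Sum>n\<in>apery_set. x ^ n) - (x ^ A - 1) / (x - 1)" .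
  have "x ^ A - 1 \<noteq> 0"
    using assms by simp
  then have "(\<Sum>n\<in>-S. x ^ n) = ((\<Sum>n\<in>apery_set. x ^ n) - (x ^ A - 1) / (x - 1)) / (x ^ A - 1)"
    by (simp flip: eq)
  also have "\<dots> = 1 / (x ^ A - 1) * (\<Sum>n\<in>apery_set. x ^ n) - 1 / (x - 1)"
    using \<open>x ^ A - 1 \<noteq> 0\<close> \<open>x \<noteq> 1\<close> by (simp add: field_simps)
  finally show ?thesis .
qed

lemma sum_power_complement_bernpoly:
  assumes m: "m \<ge> 1"
  shows "real m * (\<Sum>n\<in>-S. real n ^ (m - 1))
    = real A ^ (m - 1) * (\<Sum>n\<in>apery_set. bernpoly m (real n / real A)) - bernoulli m"
proof -
  define F where "F n = real A ^ (m - 1) * bernpoly m (real n / real A)" for n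
  have "F (n + A) - F n = real m * real n ^ (m - 1)" for n
  proof -
    have "real (n + A) / real A = real n / real A + 1"
      using modulus_pos by (simp add: field_simps)
    then have "F (n + A) - F n = real A ^ (m - 1) * (real m * (real n / real A) ^ (m - 1))"
      by (simp add: F_def bernpoly_plus_one[OF m] flip: right_diff_distrib)
    also have "\<dots> = real m * real n ^ (m - 1)"
      using modulus_pos by (simp add: power_divide)
    finally show ?thesis .
  qed
  then have "real m * (\<Sum>n\<in>-S. real n ^ (m - 1)) = (\<Sum>n\<in>apery_set. F n) - (\<Sum>r<A. F r)"
    using sum_complement_telescope[of F] by (simp add: sum_distrib_left)
  also have "(\<Sum>r<A. F r) = bernoulli m"
    using sum_bernpoly_fractions[OF modulus_pos m] by (simp add: F_def sum_distrib_left)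
  finally show ?thesis
    by (simp add: F_def sum_distrib_left)
qed

end

lemma representable_nonneg: "representable a k n \<Longrightarrow> n \<ge> 0"
  unfolding representable_def by (auto intro: sum_nonneg)

lemma representable_0: "representable a k 0"
  unfolding representable_def by (rule exI[of _ "\<lambda>_. 0"]) simp

lemma representable_add:
  assumes "representable a k m" and "representable a k n"
  shows "representable a k (m + n)"
proof -
  obtain x y where "m = (\<Sum>i=1..k. int (a i * x i))" and "n = (\<Sum>i=1..k. int (a i * y i))"
    using assms unfolding representable_def by blast
  then have "m + n = (\<Sum>i=1..k. int (a i * (x i + y i)))"
    by (simp add: sum.distrib algebra_simps)
  then show ?thesis
    unfolding representable_def by (rule exI[of _ "\<lambda>i. x i + y i"])
qed

lemma representable_generator: "i \<in> {1..k} \<Longrightarrow> representable a k (int (a i))"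
  unfolding representable_def
  by (rule exI[of _ "\<lambda>l. if l = i then 1 else 0"]) (simp add: if_distrib sum.delta cong: if_cong)

lemma representable_mult: "representable a k n \<Longrightarrow> representable a k (int t * n)"
  by (induction t) (auto simp: representable_0 algebra_simps intro: representable_add)

lemma Gcd_image_int_combination:
  "\<exists>c::nat \<Rightarrow> int. int (Gcd (a ` {1..k})) = (\<Sum>i=1..k. c i * int (a i))"
proof (induction k)
  case (Suc k)
  then obtain c where c: "int (Gcd (a ` {1..k})) = (\<Sum>i=1..k. c i * int (a i))"
    by blast
  obtain u v where uv: "u * int (a (Suc k)) + v * int (Gcd (a ` {1..k}))
      = gcd (int (a (Suc k))) (int (Gcd (a ` {1..k})))"
    using bezout_int by blast
  have insert: "{1..Suc k} = insert (Suc k) {1..k}"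
    by auto
  define c' where "c' i = (if i = Suc k then u else v * c i)" for i
  have "int (Gcd (a ` {1..Suc k})) = u * int (a (Suc k)) + v * int (Gcd (a ` {1..k}))"
    unfolding insert using uv by simp
  also have "\<dots> = (\<Sum>i=1..Suc k. c' i * int (a i))"
    unfolding insert c sum_distrib_left by (simp add: c'_def mult.assoc)
  finally show ?case
    by blast
qed simp

lemma representable_in_residue_class:
  fixes M :: nat
  assumes gcd1: "Gcd (a ` {1..k}) = 1" and r: "r < M"
  shows "\<exists>n. representable a k (int n) \<and> n mod M = r"
proof -
  obtain c where c: "1 = (\<Sum>i=1..k. c i * int (a i))"
    using Gcd_image_int_combination[of a k] gcd1 by auto
  define s where "s = (\<Sum>i=1..k. a i * nat (c i mod int M))"
  have s: "int s = (\<Sum>i=1..k. int (a i) * (c i mod int M))"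
    using r by (simp add: s_def)
  have "int s mod int M = (\<Sum>i=1..k. int (a i) * (c i mod int M) mod int M) mod int M"
    unfolding s by (simp add: mod_sum_eq)
  also have "\<dots> = (\<Sum>i=1..k. int (a i) * c i mod int M) mod int M"
    by (simp add: mod_mult_right_eq)
  also have "\<dots> = 1 mod int M"
    unfolding c by (simp add: mod_sum_eq mult.commute)
  finally have "s mod M = 1 mod M"
    by (metis of_nat_1 of_nat_eq_iff of_nat_mod)
  then have "r * s mod M = r * 1 mod M"
    by (metis mod_mult_right_eq)
  then have "r * s mod M = r"
    using r by simp
  moreover have "representable a k (int s)"
    unfolding representable_def s_def of_nat_sum by (rule exI[of _ "\<lambda>i. nat (c i mod int M)"]) simp
  then have "representable a k (int (r * s))"
    using representable_mult by simp
  ultimately show ?thesis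
    by blast
qed

lemma apery_representable:
  assumes "j \<in> {1..k}" and "a j > 0" and "Gcd (a ` {1..k}) = 1"
  shows "apery {n. representable a k (int n)} (a j)"
proof
  show "n + a j \<in> {n. representable a k (int n)}" if "n \<in> {n. representable a k (int n)}" for n
    using that representable_add[OF _ representable_generator[OF assms(1)]] by simp
  show "\<exists>n\<in>{n. representable a k (int n)}. n mod a j = r" if "r < a j" for r
    using representable_in_residue_class[OF assms(3) that] by auto
qed (fact assms(2))

lemma int_image_nonrepresentable:
  "int ` (- {n. representable a k (int n)}) = {n. n > 0 \<and> \<not> representable a k n}"
proof (intro equalityI subsetI)
  fix n assume "n \<in> int ` (- {n. representable a k (int n)})"
  then obtain m where "n = int m" and "\<not> representable a k (int m)"
    by auto
  moreover have "m \<noteq> 0"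
    using calculation(2) representable_0[of a k] by (metis of_nat_0)
  ultimately show "n \<in> {n. n > 0 \<and> \<not> representable a k n}"
    by simp
next
  fix n assume "n \<in> {n. n > 0 \<and> \<not> representable a k n}"
  then have "n = int (nat n)" and "nat n \<in> - {n. representable a k (int n)}"
    by auto
  then show "n \<in> int ` (- {n. representable a k (int n)})"
    by blast
qed

lemma representable_diff_imp_le: "representable a k (int n - int A) \<Longrightarrow> A \<le> n"
  using representable_nonneg by fastforce

lemma int_image_apery_set_representable:
  assumes "apery {n. representable a k (int n)} A"
  shows "int ` apery.apery_set {n. representable a k (int n)} A
    = {n. n > 0 \<and> representable a k n \<and> \<not> representable a k (n - int A)} \<union> {0}"
proof -
  interpret apery "{n. representable a k (int n)}" A
    by (fact assms)
  show ?thesis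
  proof (intro equalityI subsetI)
    fix x assume "x \<in> int ` apery_set"
    then obtain n where x: "x = int n" and "n \<in> apery_set"
      by (rule imageE)
    then show "x \<in> {n. n > 0 \<and> representable a k n \<and> \<not> representable a k (n - int A)} \<union> {0}"
      using representable_diff_imp_le[of a k n A] by (auto simp: apery_set_def)
  next
    fix x assume x: "x \<in> {n. n > 0 \<and> representable a k n \<and> \<not> representable a k (n - int A)} \<union> {0}"
    then have x_nat: "x = int (nat x)"
      by auto
    have "nat x \<in> apery_set"
      using x modulus_pos representable_0[of a k] representable_diff_imp_le[of a k "nat x" A]
      by (subst (asm) x_nat) (auto simp: apery_set_def)
    then show "x \<in> int ` apery_set"
      by (rule image_eqI[where f = int, OF x_nat])
  qed
qed

theorem mainTheorem2:
  fixes a :: "nat \<Rightarrow> nat" and k :: nat and j :: nat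
  assumes pos: "\<forall>i\<in>{1..k}. a i > 0"
    and gcd1: "Gcd (a ` {1..k}) = 1"
    and j: "j \<in> {1..k}"
  defines "NR \<equiv> {n::int. n > 0 \<and> \<not> representable a k n}"
    and "N0 \<equiv> {n::int. n > 0 \<and> representable a k n \<and> \<not> representable a k (n - int (a j))} \<union> {0}"
  shows "finite NR
    \<and> (\<forall>z::complex. z \<noteq> 0 \<and> exp (of_nat (a j) * z) \<noteq> 1 \<longrightarrow>
          (\<Sum>n\<in>NR. exp (of_int n * z))
            = (1 / (exp (of_nat (a j) * z) - 1)) * (\<Sum>n\<in>N0. exp (of_int n * z)) - 1 / (exp z - 1))
    \<and> (\<forall>m::nat. m \<ge> 1 \<longrightarrow>
          real m * (\<Sum>n\<in>NR. (real_of_int n) ^ (m - 1))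
            = real (a j) ^ (m - 1) * (\<Sum>n\<in>N0. bernpoly m (real_of_int n / real (a j))) - bernoulli m)"
proof -
  interpret apery "{n. representable a k (int n)}" "a j"
    using apery_representable[OF j bspec[OF pos j] gcd1] .
  have NR_eq: "NR = int ` (- {n. representable a k (int n)})"
    unfolding NR_def by (rule int_image_nonrepresentable[symmetric])
  have N0_eq: "N0 = int ` apery_set"
    unfolding N0_def using int_image_apery_set_representable[OF apery_axioms] by simp
  show ?thesis
  proof (intro conjI allI impI)
    show "finite NR"
      by (simp add: NR_eq finite_complement)
  next
    fix z :: complex
    assume "z \<noteq> 0 \<and> exp (of_nat (a j) * z) \<noteq> 1"
    then have "exp z ^ a j \<noteq> 1"
      by (simp add: exp_of_nat_mult)
    from sum_power_complement[OF this]
    show "(\<Sum>n\<in>NR. exp (of_int n * z))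
        = (1 / (exp (of_nat (a j) * z) - 1)) * (\<Sum>n\<in>N0. exp (of_int n * z)) - 1 / (exp z - 1)"
      by (simp add: NR_eq N0_eq sum.reindex exp_of_nat_mult)
  next
    fix m :: nat
    assume "m \<ge> 1"
    from sum_power_complement_bernpoly[OF this]
    show "real m * (\<Sum>n\<in>NR. (real_of_int n) ^ (m - 1))
        = real (a j) ^ (m - 1) * (\<Sum>n\<in>N0. bernpoly m (real_of_int n / real (a j))) - bernoulli m"
      by (simp add: NR_eq N0_eq sum.reindex)
  qed
qed

end
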